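(* Let $n\ge1$ and let $\mathcal W$ be a nonprincipal ultrafilter on a countably infinite set which is not a P-point. If $\mathcal W$ is $(n+1,T(n+1))$-weakly Ramsey, then it is also $(n,T(n))$-weakly Ramsey.
   Context: An ultrafilter $\mathcal W$ on a countably infinite set $S$ is a P-point if for every function $f$ on $S$ there is $A\in\mathcal W$ with $f\restriction A$ finite-to-one or constant. $\mathcal W$ is $(n,t)$-weakly Ramsey if whenever $[S]^n$ is partitioned into finitely many pieces there is $H\in\mathcal W$ with $[H]^n$ meeting at most $t$ pieces. An $n$-type is a linear pre-order of the formal symbols $x_1,\dots,x_n,y_1,\dots,y_n$ such that $y_1<\dots<y_n$ strictly, each $x_i<y_i$ strictly, and any two distinct equivalent symbols are both $x$'s; $T(n)$ denotes the (finite) number of $n$-types (e.g. $T(2)=4$). *)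

theory Defs
  imports Main "HOL-Library.Ramsey" "HOL-Library.Countable_Set"
begin

definition ultrafilter_on :: "'a set \<Rightarrow> 'a set set \<Rightarrow> bool" where
  "ultrafilter_on S W \<longleftrightarrow>
     W \<subseteq> Pow S \<and> S \<in> W \<and> {} \<notin> W \<and>
     (\<forall>A B. A \<in> W \<and> B \<in> W \<longrightarrow> A \<inter> B \<in> W) \<and>
     (\<forall>A B. A \<in> W \<and> A \<subseteq> B \<and> B \<subseteq> S \<longrightarrow> B \<in> W) \<and>
     (\<forall>A. A \<subseteq> S \<longrightarrow> A \<in> W \<or> S - A \<in> W)"

definition nonprincipal :: "'a set \<Rightarrow> 'a set set \<Rightarrow> bool" where
  "nonprincipal S W \<longleftrightarrow> (\<forall>x\<in>S. {x} \<notin> W)"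

text \<open>P-point: every function on S is finite-to-one or constant on some member of W.
  Since S is countable, functions into nat (= omega) suffice.\<close>
definition P_point :: "'a set \<Rightarrow> 'a set set \<Rightarrow> bool" where
  "P_point S W \<longleftrightarrow>
     (\<forall>f :: 'a \<Rightarrow> nat. \<exists>A\<in>W.
        (\<forall>y. finite {x\<in>A. f x = y}) \<or> (\<exists>c. \<forall>x\<in>A. f x = c))"

definition weakly_Ramsey :: "nat \<Rightarrow> nat \<Rightarrow> 'a set \<Rightarrow> 'a set set \<Rightarrow> bool" where
  "weakly_Ramsey n t S W \<longleftrightarrow>
     (\<forall>(k::nat) (c :: 'a set \<Rightarrow> nat). (\<forall>X\<in>[S]\<^bsup>n\<^esup>. c X < k) \<longrightarrow>
        (\<exists>H\<in>W. card (c ` ([H]\<^bsup>n\<^esup>)) \<le> t))"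

text \<open>Symbols: x_i = Inl i, y_i = Inr i for i in {1..n}.\<close>
definition type_symbols :: "nat \<Rightarrow> (nat + nat) set" where
  "type_symbols n = Inl ` {1..n} \<union> Inr ` {1..n}"

text \<open>n-types: linear pre-orders R (R(a,b) means a \<le> b) on the symbols with
  y_1 < ... < y_n strictly, x_i < y_i strictly, and distinct equivalent symbols both x's.\<close>
definition n_types :: "nat \<Rightarrow> (nat + nat) rel set" where
  "n_types n = {R. R \<subseteq> type_symbols n \<times> type_symbols n \<and>
     (\<forall>a\<in>type_symbols n. (a, a) \<in> R) \<and>
     (\<forall>a b c. (a, b) \<in> R \<and> (b, c) \<in> R \<longrightarrow> (a, c) \<in> R) \<and>
     (\<forall>a\<in>type_symbols n. \<forall>b\<in>type_symbols n. (a, b) \<in> R \<or> (b, a) \<in> R) \<and>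
     (\<forall>i\<in>{1..n}. \<forall>j\<in>{1..n}. i < j \<longrightarrow> (Inr i, Inr j) \<in> R \<and> (Inr j, Inr i) \<notin> R) \<and>
     (\<forall>i\<in>{1..n}. (Inl i, Inr i) \<in> R \<and> (Inr i, Inl i) \<notin> R) \<and>
     (\<forall>a b. (a, b) \<in> R \<and> (b, a) \<in> R \<and> a \<noteq> b \<longrightarrow> (\<exists>i j. a = Inl i \<and> b = Inl j))}"

definition T :: "nat \<Rightarrow> nat" where
  "T n = card (n_types n)"

end

theory Submission
  imports Defs
begin

text \<open>Transport everything along an injection of S into the natural numbers. If f witnesses that W
  is not a P-point, let h z be the least element of the f-fibre of z. Then some G in W satisfies
  h z < z and h z \<notin> G for z in G, and every member of W contains infinitely many infinite
  h-fibres. Colour an (n+1)-set by its type under h (the relative order of its elements and their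
  h-values), except when that type arises from an n-type by adding a top element whose h-value lies
  above everything else; then use the given colour of its n smallest elements. Inside a member of W
  contained in G every (n+1)-type is realised, so on a set that is homogeneous up to T(n+1) colours
  the remaining types leave room for at most T(n) colours of the given colouring.\<close>

section \<open>Ultrafilters and their images under bijections\<close>

lemma ultrafilter_on_subset: "ultrafilter_on S W \<Longrightarrow> A \<in> W \<Longrightarrow> A \<subseteq> S"
  by (auto simp: ultrafilter_on_def)

lemma ultrafilter_on_empty: "ultrafilter_on S W \<Longrightarrow> {} \<notin> W"
  by (simp add: ultrafilter_on_def)

lemma ultrafilter_on_Int: "ultrafilter_on S W \<Longrightarrow> A \<in> W \<Longrightarrow> B \<in> W \<Longrightarrow> A \<inter> B \<in> W"
  by (simp add: ultrafilter_on_def)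

lemma ultrafilter_on_mono:
  "ultrafilter_on S W \<Longrightarrow> A \<in> W \<Longrightarrow> A \<subseteq> B \<Longrightarrow> B \<subseteq> S \<Longrightarrow> B \<in> W"
  unfolding ultrafilter_on_def by blast

lemma ultrafilter_on_Diff: "ultrafilter_on S W \<Longrightarrow> A \<subseteq> S \<Longrightarrow> A \<notin> W \<Longrightarrow> S - A \<in> W"
  unfolding ultrafilter_on_def by blast

lemma ultrafilter_on_finite_UN:
  assumes U: "ultrafilter_on S W" and "finite V"
    and "(\<Union>v\<in>V. F v) \<in> W" and "\<And>v. F v \<subseteq> S"
  shows "\<exists>v\<in>V. F v \<in> W"
  using assms(2,3)
proof (induction V)
  case empty
  then show ?case using ultrafilter_on_empty[OF U] by simp
next
  case (insert x V)
  show ?case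
  proof (cases "F x \<in> W")
    case False
    then have "(\<Union>v\<in>insert x V. F v) \<inter> (S - F x) \<in> W"
      using insert.prems assms(4) U by (intro ultrafilter_on_Int ultrafilter_on_Diff) auto
    then have "(\<Union>v\<in>V. F v) \<in> W"
      by (rule ultrafilter_on_mono[OF U]) (use assms(4) in auto)
    then show ?thesis using insert.IH by blast
  qed simp
qed

lemma ultrafilter_on_image:
  assumes e: "bij_betw e S S'" and U: "ultrafilter_on S W"
  shows "ultrafilter_on S' ((`) e ` W)"
proof -
  have WS: "A \<in> W \<Longrightarrow> A \<subseteq> S" for A using U by (rule ultrafilter_on_subset)
  have inj: "inj_on e S" and S': "e ` S = S'" using e by (auto simp: bij_betw_def)
  have preimage: "B = e ` (S \<inter> e -` B)" if "B \<subseteq> S'" for B using that S' by auto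
  show ?thesis
    unfolding ultrafilter_on_def
  proof (intro conjI allI impI)
    show "(`) e ` W \<subseteq> Pow S'" using WS S' by auto
    show "S' \<in> (`) e ` W" using U S' by (auto simp: ultrafilter_on_def)
    show "{} \<notin> (`) e ` W" using ultrafilter_on_empty[OF U] by auto
  next
    fix A' B' assume "A' \<in> (`) e ` W \<and> B' \<in> (`) e ` W"
    then obtain A B where "A \<in> W" "B \<in> W" "A' = e ` A" "B' = e ` B" by auto
    moreover have "e ` A \<inter> e ` B = e ` (A \<inter> B)"
      using inj_on_image_Int[OF inj WS[OF \<open>A \<in> W\<close>] WS[OF \<open>B \<in> W\<close>]] by simp
    ultimately show "A' \<inter> B' \<in> (`) e ` W" using ultrafilter_on_Int[OF U] by auto
  next
    fix A' B' assume "A' \<in> (`) e ` W \<and> A' \<subseteq> B' \<and> B' \<subseteq> S'"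
    then obtain A where A: "A \<in> W" "e ` A \<subseteq> B'" "B' \<subseteq> S'" by auto
    then have "S \<inter> e -` B' \<in> W" using U WS by (intro ultrafilter_on_mono[OF U A(1)]) auto
    then show "B' \<in> (`) e ` W" using preimage[OF A(3)] by blast
  next
    fix A' assume A': "A' \<subseteq> S'"
    show "A' \<in> (`) e ` W \<or> S' - A' \<in> (`) e ` W"
    proof (cases "S \<inter> e -` A' \<in> W")
      case False
      then have "S - (S \<inter> e -` A') \<in> W" using U by (intro ultrafilter_on_Diff) auto
      moreover have "e ` (S - (S \<inter> e -` A')) = S' - A'" using S' by auto
      ultimately show ?thesis by blast
    qed (use preimage[OF A'] in blast)
  qed
qed

lemma P_point_of_image:
  assumes e: "bij_betw e S S'" and WS: "W \<subseteq> Pow S" and P: "P_point S' ((`) e ` W)"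
  shows "P_point S W"
  unfolding P_point_def
proof
  fix f :: "'a \<Rightarrow> nat"
  have inj: "inj_on e S" using e by (simp add: bij_betw_def)
  have "\<exists>A'\<in>(`) e ` W. (\<forall>y. finite {x\<in>A'. (f \<circ> inv_into S e) x = y}) \<or>
      (\<exists>c. \<forall>x\<in>A'. (f \<circ> inv_into S e) x = c)"
    using P unfolding P_point_def by (rule spec)
  then obtain A' where "A' \<in> (`) e ` W" and A':
    "(\<forall>y. finite {x\<in>A'. f (inv_into S e x) = y}) \<or> (\<exists>c. \<forall>x\<in>A'. f (inv_into S e x) = c)"
    by auto
  then obtain A where A: "A \<in> W" and "A' = e ` A" by blast
  have AS: "A \<subseteq> S" using A WS by auto
  have fibre: "{x\<in>e ` A. f (inv_into S e x) = y} = e ` {x\<in>A. f x = y}" for y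
    using AS inv_into_f_f[OF inj] by (auto simp: subset_iff)
  have "finite {x\<in>A. f x = y}" if "finite (e ` {x\<in>A. f x = y})" for y
    using that inj_on_subset[OF inj, of "{x\<in>A. f x = y}"] AS finite_image_iff by blast
  then have "(\<forall>y. finite {x\<in>A. f x = y}) \<or> (\<exists>c. \<forall>x\<in>A. f x = c)"
    using A' AS inv_into_f_f[OF inj] unfolding \<open>A' = e ` A\<close> fibre by (auto simp: subset_iff)
  then show "\<exists>A\<in>W. (\<forall>y. finite {x\<in>A. f x = y}) \<or> (\<exists>c. \<forall>x\<in>A. f x = c)"
    using A by blast
qed

lemma weakly_Ramsey_image:
  assumes e: "bij_betw e S S'" and WS: "W \<subseteq> Pow S" and R: "weakly_Ramsey n t S W"
  shows "weakly_Ramsey n t S' ((`) e ` W)"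
  unfolding weakly_Ramsey_def
proof (intro allI impI)
  fix k and c :: "'b set \<Rightarrow> nat"
  assume c: "\<forall>X\<in>[S']\<^bsup>n\<^esup>. c X < k"
  have nsets: "[e ` A]\<^bsup>n\<^esup> = (`) e ` [A]\<^bsup>n\<^esup>" if "A \<subseteq> S" for A
  proof -
    have "inj_on e A" using e that by (auto simp: bij_betw_def intro: inj_on_subset)
    then show ?thesis using bij_betw_nsets[of e A "e ` A" n] by (simp add: bij_betw_def)
  qed
  have "\<forall>X\<in>[S]\<^bsup>n\<^esup>. (c \<circ> (`) e) X < k"
  proof
    fix X assume "X \<in> [S]\<^bsup>n\<^esup>"
    then have "e ` X \<in> [S']\<^bsup>n\<^esup>" using nsets[of S] e by (simp add: bij_betw_def)
    then show "(c \<circ> (`) e) X < k" using c by simp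
  qed
  then obtain H where H: "H \<in> W" "card ((c \<circ> (`) e) ` [H]\<^bsup>n\<^esup>) \<le> t"
    using R unfolding weakly_Ramsey_def by blast
  have "c ` [e ` H]\<^bsup>n\<^esup> = (c \<circ> (`) e) ` [H]\<^bsup>n\<^esup>"
    using nsets[of H] H(1) WS by (simp add: image_comp subset_iff)
  then show "\<exists>H'\<in>(`) e ` W. card (c ` [H']\<^bsup>n\<^esup>) \<le> t"
    using H by (intro bexI[of _ "e ` H"]) simp_all
qed

lemma weakly_Ramsey_image_iff:
  assumes e: "bij_betw e S S'" and WS: "W \<subseteq> Pow S"
  shows "weakly_Ramsey n t S' ((`) e ` W) \<longleftrightarrow> weakly_Ramsey n t S W"
proof
  have inj: "inj_on e S" using e by (simp add: bij_betw_def)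
  have "(`) (inv_into S e) ` (`) e ` W = (\<lambda>A. A) ` W"
    unfolding image_comp using inv_into_image_cancel[OF inj] WS by (intro image_cong) auto
  then have "(`) (inv_into S e) ` (`) e ` W = W" by simp
  moreover have "(`) e ` W \<subseteq> Pow S'" using e WS by (auto simp: bij_betw_def)
  ultimately show "weakly_Ramsey n t S' ((`) e ` W) \<Longrightarrow> weakly_Ramsey n t S W"
    using weakly_Ramsey_image[OF bij_betw_inv_into[OF e], of "(`) e ` W"] by simp
qed (rule weakly_Ramsey_image[OF e WS])

section \<open>The predecessor map of a non-P-point\<close>

lemma infinitely_many_infinite_fibres:
  assumes U: "ultrafilter_on S W" and H: "H \<in> W"
    and f: "\<And>A. A \<in> W \<Longrightarrow> (\<exists>y. infinite {x\<in>A. f x = y}) \<and> (\<forall>c. \<exists>x\<in>A. f x \<noteq> c)"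
    and h: "\<And>z z'. z \<in> S \<Longrightarrow> z' \<in> S \<Longrightarrow> h z = h z' \<longleftrightarrow> f z = f z'"
  shows "infinite {v. infinite {z\<in>H. h z = v}}"
proof
  define V where "V = {v. infinite {z\<in>H. h z = v}}"
  assume "finite V"
  have HS: "H \<subseteq> S" using U H by (rule ultrafilter_on_subset)
  define H1 where "H1 = {z\<in>H. h z \<in> V}"
  show False
  proof (cases "H1 \<in> W")
    case True
    have "H1 = (\<Union>v\<in>V. {z\<in>H. h z = v})" by (auto simp: H1_def)
    then obtain v where v: "{z\<in>H. h z = v} \<in> W"
      using ultrafilter_on_finite_UN[OF U \<open>finite V\<close>, of "\<lambda>v. {z\<in>H. h z = v}"] True HS by auto
    then have "{z\<in>H. h z = v} \<noteq> {}" using ultrafilter_on_empty[OF U] by metis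
    then obtain x0 where x0: "x0 \<in> H" "h x0 = v" by auto
    obtain x where "x \<in> H" "h x = v" "f x \<noteq> f x0" using f[OF v] by auto
    then show False using h[of x x0] x0 HS by auto
  next
    case False
    then have "H \<inter> (S - H1) \<in> W"
      using U H HS by (intro ultrafilter_on_Int ultrafilter_on_Diff) (auto simp: H1_def)
    then obtain y where inf: "infinite {x\<in>H \<inter> (S - H1). f x = y}" using f by blast
    then have "{x\<in>H \<inter> (S - H1). f x = y} \<noteq> {}" by (rule infinite_imp_nonempty)
    then obtain x0 where x0: "x0 \<in> H" "x0 \<notin> H1" "f x0 = y" by auto
    have "{x\<in>H \<inter> (S - H1). f x = y} \<subseteq> {z\<in>H. h z = h x0}" using h x0 HS by auto
    moreover have "finite {z\<in>H. h z = h x0}" using x0 by (simp add: H1_def V_def)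
    ultimately show False using inf finite_subset by blast
  qed
qed

text \<open>The predecessor of z is the least element of its f-fibre; the fibre minima form a set on
  which f is injective, so they are not in W.\<close>
lemma not_P_point_predecessor:
  fixes S :: "nat set"
  assumes U: "ultrafilter_on S W" and "\<not> P_point S W"
  obtains G h where "G \<in> W" "\<And>z. z \<in> G \<Longrightarrow> h z < z \<and> h z \<notin> G"
    "\<And>H. H \<in> W \<Longrightarrow> infinite {v. infinite {z\<in>H. h z = v}}"
proof -
  obtain f :: "nat \<Rightarrow> nat" where
    f: "\<And>A. A \<in> W \<Longrightarrow> (\<exists>y. infinite {x\<in>A. f x = y}) \<and> (\<forall>c. \<exists>x\<in>A. f x \<noteq> c)"
    using assms(2) unfolding P_point_def by blast
  define h where "h z = (LEAST s. s \<in> S \<and> f s = f z)" for z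
  have h: "h z \<in> S \<and> f (h z) = f z \<and> h z \<le> z" if "z \<in> S" for z
    using LeastI[of "\<lambda>s. s \<in> S \<and> f s = f z" z] Least_le[of "\<lambda>s. s \<in> S \<and> f s = f z" z] that
    by (simp add: h_def)
  have h_eq_iff: "h z = h z' \<longleftrightarrow> f z = f z'" if "z \<in> S" "z' \<in> S" for z z'
  proof
    assume "h z = h z'" then show "f z = f z'" using h that by metis
  qed (simp add: h_def)
  define M where "M = {z\<in>S. h z = z}"
  have "M \<notin> W"
  proof
    assume "M \<in> W"
    then obtain y where "infinite {x\<in>M. f x = y}" using f by blast
    moreover have "{x\<in>M. f x = y} \<subseteq> {LEAST s. s \<in> S \<and> f s = y}"
      by (auto simp: M_def h_def)
    ultimately show False using finite_subset by blast
  qed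
  then have "S - M \<in> W" using ultrafilter_on_Diff[OF U] by (simp add: M_def)
  moreover have "h z < z \<and> h z \<notin> S - M" if "z \<in> S - M" for z
    using that h[of z] h_eq_iff[of "h z" z] by (auto simp: M_def)
  moreover have "infinite {v. infinite {z\<in>H. h z = v}}" if "H \<in> W" for H
    using infinitely_many_infinite_fibres[OF U that f h_eq_iff] by blast
  ultimately show ?thesis using that by blast
qed

section \<open>Types of tuples\<close>

lemma finite_type_symbols [simp]: "finite (type_symbols m)"
  by (simp add: type_symbols_def)

lemma type_symbols_iff [simp]:
  "Inl i \<in> type_symbols m \<longleftrightarrow> i \<in> {1..m}" "Inr i \<in> type_symbols m \<longleftrightarrow> i \<in> {1..m}"
  by (auto simp: type_symbols_def)

lemma type_symbols_Suc:
  "type_symbols (Suc m) = insert (Inl (Suc m)) (insert (Inr (Suc m)) (type_symbols m))"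
  by (auto simp: type_symbols_def)

lemma finite_n_types: "finite (n_types m)"
  by (rule finite_subset[of _ "Pow (type_symbols m \<times> type_symbols m)"]) (auto simp: n_types_def)

lemma n_typesD:
  assumes "R \<in> n_types m"
  shows "R \<subseteq> type_symbols m \<times> type_symbols m" and "trans R"
    and "\<And>a b. a \<in> type_symbols m \<Longrightarrow> b \<in> type_symbols m \<Longrightarrow> (a, b) \<in> R \<or> (b, a) \<in> R"
    and "\<And>i j. i \<in> {1..m} \<Longrightarrow> j \<in> {1..m} \<Longrightarrow> i < j \<Longrightarrow> (Inr j, Inr i) \<notin> R"
    and "\<And>i. i \<in> {1..m} \<Longrightarrow> (Inr i, Inl i) \<notin> R"
    and "\<And>a b. (a, b) \<in> R \<Longrightarrow> (b, a) \<in> R \<Longrightarrow> a \<noteq> b \<Longrightarrow> \<exists>i j. a = Inl i \<and> b = Inl j"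
  using assms unfolding n_types_def trans_def by blast+

definition preorder_rank :: "'a rel \<Rightarrow> 'a set \<Rightarrow> 'a \<Rightarrow> nat" where
  "preorder_rank R X a = card {b\<in>X. (b, a) \<in> R \<and> (a, b) \<notin> R}"

lemma preorder_rank_le_iff:
  assumes "finite X" "trans R" and total: "\<And>a b. a \<in> X \<Longrightarrow> b \<in> X \<Longrightarrow> (a, b) \<in> R \<or> (b, a) \<in> R"
    and "a \<in> X" "b \<in> X"
  shows "(a, b) \<in> R \<longleftrightarrow> preorder_rank R X a \<le> preorder_rank R X b"
proof -
  define below where "below x = {b\<in>X. (b, x) \<in> R \<and> (x, b) \<notin> R}" for x
  have fin: "finite (below x)" for x using assms(1) by (simp add: below_def)
  note trans = transD[OF \<open>trans R\<close>]
  show ?thesis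
    unfolding preorder_rank_def below_def[symmetric]
  proof
    assume ab: "(a, b) \<in> R"
    have "below a \<subseteq> below b"
      unfolding below_def using trans[OF _ ab] trans[OF ab] by blast
    then show "card (below a) \<le> card (below b)" by (intro card_mono fin)
  next
    assume le: "card (below a) \<le> card (below b)"
    show "(a, b) \<in> R"
    proof (rule ccontr)
      assume ab: "(a, b) \<notin> R"
      then have ba: "(b, a) \<in> R" using total assms(4,5) by blast
      have "below b \<subseteq> below a"
        unfolding below_def using trans[OF _ ba] trans[OF ba] by blast
      moreover have "b \<in> below a" "b \<notin> below b" using ab ba assms(5) by (simp_all add: below_def)
      ultimately have "below b \<subset> below a" by blast
      then show False using psubset_card_mono[OF fin] le by (simp add: not_le[symmetric])
    qed
  qed
qed

lemma preorder_rank_less_card: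
  assumes "finite X" "a \<in> X"
  shows "preorder_rank R X a < card X"
proof -
  have "{b\<in>X. (b, a) \<in> R \<and> (a, b) \<notin> R} \<subset> X" using assms(2) by blast
  then show ?thesis unfolding preorder_rank_def by (rule psubset_card_mono[OF assms(1)])
qed

lemma n_type_rank:
  assumes R: "R \<in> n_types m" and r: "r = preorder_rank R (type_symbols m)"
  shows "\<And>a b. a \<in> type_symbols m \<Longrightarrow> b \<in> type_symbols m \<Longrightarrow> (a, b) \<in> R \<longleftrightarrow> r a \<le> r b"
    and "\<And>a. a \<in> type_symbols m \<Longrightarrow> r a < card (type_symbols m)"
    and "\<And>i j. i \<in> {1..m} \<Longrightarrow> j \<in> {1..m} \<Longrightarrow> i < j \<Longrightarrow> r (Inr i) < r (Inr j)"
    and "\<And>i j. i \<in> {1..m} \<Longrightarrow> j \<in> {1..m} \<Longrightarrow> r (Inr i) = r (Inr j) \<Longrightarrow> i = j"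
    and "\<And>j. j \<in> {1..m} \<Longrightarrow> r (Inl j) < r (Inr j)"
    and "\<And>i j. i \<in> {1..m} \<Longrightarrow> j \<in> {1..m} \<Longrightarrow> r (Inl i) \<noteq> r (Inr j)"
proof -
  show le_iff: "(a, b) \<in> R \<longleftrightarrow> r a \<le> r b" if "a \<in> type_symbols m" "b \<in> type_symbols m" for a b
    using preorder_rank_le_iff[OF finite_type_symbols n_typesD(2)[OF R] n_typesD(3)[OF R] that] r
    by simp
  show "r a < card (type_symbols m)" if "a \<in> type_symbols m" for a
    using preorder_rank_less_card[OF finite_type_symbols that] r by blast
  show y_less: "r (Inr i) < r (Inr j)" if "i \<in> {1..m}" "j \<in> {1..m}" "i < j" for i j
    using n_typesD(4)[OF R that] le_iff[of "Inr j" "Inr i"] that by simp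
  show "i = j" if "i \<in> {1..m}" "j \<in> {1..m}" "r (Inr i) = r (Inr j)" for i j
    using y_less[of i j] y_less[of j i] that by (cases i j rule: linorder_cases) simp_all
  show "r (Inl j) < r (Inr j)" if "j \<in> {1..m}" for j
    using n_typesD(5)[OF R that] le_iff[of "Inr j" "Inl j"] that by simp
  show "r (Inl i) \<noteq> r (Inr j)" if "i \<in> {1..m}" "j \<in> {1..m}" for i j
    using n_typesD(6)[OF R, of "Inl i" "Inr j"] le_iff[of "Inl i" "Inr j"] le_iff[of "Inr j" "Inl i"] that
    by auto
qed

lemma strict_sorted_nth_less_iff:
  fixes zs :: "'a::linorder list"
  shows "sorted_wrt (<) zs \<Longrightarrow> i < length zs \<Longrightarrow> j < length zs \<Longrightarrow> zs ! i < zs ! j \<longleftrightarrow> i < j"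
proof
  assume "sorted_wrt (<) zs" "i < length zs" "j < length zs" "zs ! i < zs ! j"
  then show "i < j"
    using sorted_wrt_nth_less[of "(<)" zs j i] by (cases i j rule: linorder_cases) auto
qed (rule sorted_wrt_nth_less)

text \<open>The symbol y_i is evaluated at the i-th entry of zs (counting from 1), and x_i at its image
  under h.\<close>
definition tuple_value :: "(nat \<Rightarrow> nat) \<Rightarrow> nat list \<Rightarrow> nat + nat \<Rightarrow> nat" where
  "tuple_value h zs a = (case a of Inl i \<Rightarrow> h (zs ! (i - 1)) | Inr i \<Rightarrow> zs ! (i - 1))"

definition tuple_type :: "(nat \<Rightarrow> nat) \<Rightarrow> nat \<Rightarrow> nat list \<Rightarrow> (nat + nat) rel" where
  "tuple_type h m zs = {(a, b). a \<in> type_symbols m \<and> b \<in> type_symbols m \<and>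
     tuple_value h zs a \<le> tuple_value h zs b}"

lemma tuple_type_in_n_types:
  assumes zs: "sorted_wrt (<) zs" "length zs = m"
    and h: "\<And>z. z \<in> set zs \<Longrightarrow> h z < z \<and> h z \<notin> set zs"
  shows "tuple_type h m zs \<in> n_types m"
proof -
  have mem: "zs ! (i - 1) \<in> set zs" if "i \<in> {1..m}" for i using that zs(2) by auto
  have less_iff: "zs ! (i - 1) < zs ! (j - 1) \<longleftrightarrow> i < j" if "i \<in> {1..m}" "j \<in> {1..m}" for i j
  proof -
    have "zs ! (i - 1) < zs ! (j - 1) \<longleftrightarrow> i - 1 < j - 1"
      using strict_sorted_nth_less_iff[OF zs(1), of "i - 1" "j - 1"] zs(2) that by auto
    then show ?thesis using that by auto
  qed
  have x_less_y: "h (zs ! (i - 1)) < zs ! (i - 1)" if "i \<in> {1..m}" for i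
    using h[OF mem[OF that]] by simp
  have x_ne_y: "h (zs ! (i - 1)) \<noteq> zs ! (j - 1)" if "i \<in> {1..m}" "j \<in> {1..m}" for i j
    using h[OF mem[OF that(1)]] mem[OF that(2)] by auto
  have y_inj: "zs ! (i - 1) = zs ! (j - 1) \<Longrightarrow> i = j" if "i \<in> {1..m}" "j \<in> {1..m}" for i j
    using less_iff[OF that] less_iff[OF that(2,1)] by (cases i j rule: linorder_cases) auto
  have ties: "\<exists>i j. a = Inl i \<and> b = Inl j"
    if "a \<in> type_symbols m" "b \<in> type_symbols m" "a \<noteq> b"
      "tuple_value h zs a = tuple_value h zs b" for a b
  proof (cases a; cases b)
    fix i j assume "a = Inl i" "b = Inr j"
    then show ?thesis using that x_ne_y[of i j] by (simp add: tuple_value_def)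
  next
    fix i j assume "a = Inr i" "b = Inl j"
    then show ?thesis using that x_ne_y[of j i] by (simp add: tuple_value_def)
  next
    fix i j assume "a = Inr i" "b = Inr j"
    then show ?thesis using that y_inj[of i j] by (simp add: tuple_value_def)
  qed simp
  show ?thesis
    unfolding n_types_def
  proof (intro CollectI conjI ballI allI impI)
    fix a b assume "(a, b) \<in> tuple_type h m zs \<and> (b, a) \<in> tuple_type h m zs \<and> a \<noteq> b"
    then show "\<exists>i j. a = Inl i \<and> b = Inl j" by (intro ties) (auto simp: tuple_type_def)
  next
    fix i j assume "i \<in> {1..m}" "j \<in> {1..m}" "i < j"
    then show "(Inr i, Inr j) \<in> tuple_type h m zs" "(Inr j, Inr i) \<notin> tuple_type h m zs"
      using less_iff[of i j] by (auto simp: tuple_type_def tuple_value_def)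
  next
    fix i assume "i \<in> {1..m}"
    then show "(Inl i, Inr i) \<in> tuple_type h m zs" "(Inr i, Inl i) \<notin> tuple_type h m zs"
      using x_less_y[of i] by (auto simp: tuple_type_def tuple_value_def)
  qed (auto simp: tuple_type_def)
qed

text \<open>The type of a tuple extended by an element z whose h-value lies above the whole tuple.\<close>
definition extend_type :: "nat \<Rightarrow> (nat + nat) rel \<Rightarrow> (nat + nat) rel" where
  "extend_type n R = R \<union> {(a, Inl (Suc n)) | a. a \<in> type_symbols n}
     \<union> {(a, Inr (Suc n)) | a. a \<in> type_symbols (Suc n)} \<union> {(Inl (Suc n), Inl (Suc n))}"

lemma tuple_type_append_top:
  assumes len: "length zs = n" and below: "\<And>u. u \<in> set zs \<Longrightarrow> h u < u \<and> u < h z"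
    and "h z < z"
  shows "tuple_type h (Suc n) (zs @ [z]) = extend_type n (tuple_type h n zs)"
proof -
  define v where "v = tuple_value h (zs @ [z])"
  have old: "v a = tuple_value h zs a" if "a \<in> type_symbols n" for a
    using that len by (auto simp: v_def type_symbols_def tuple_value_def nth_append)
  have new: "v (Inl (Suc n)) = h z" "v (Inr (Suc n)) = z"
    using len by (simp_all add: v_def tuple_value_def nth_append)
  have old_below: "v a < h z" if a: "a \<in> type_symbols n" for a
  proof -
    obtain i where "i \<in> {1..n}" "a = Inl i \<or> a = Inr i"
      using a by (cases a) auto
    moreover from this have "zs ! (i - 1) \<in> set zs" using len by auto
    ultimately show ?thesis
      using below[of "zs ! (i - 1)"] old[OF a] by (auto simp: tuple_value_def)
  qed
  have "(a, b) \<in> tuple_type h (Suc n) (zs @ [z]) \<longleftrightarrow> (a, b) \<in> extend_type n (tuple_type h n zs)"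
    for a b
  proof -
    have "(a, b) \<in> tuple_type h (Suc n) (zs @ [z]) \<longleftrightarrow>
        a \<in> type_symbols (Suc n) \<and> b \<in> type_symbols (Suc n) \<and> v a \<le> v b"
      by (simp add: tuple_type_def v_def)
    moreover have "(a, b) \<in> extend_type n (tuple_type h n zs) \<longleftrightarrow>
        (a \<in> type_symbols n \<and> b \<in> type_symbols n \<and> v a \<le> v b) \<or>
        (a \<in> type_symbols n \<and> b = Inl (Suc n)) \<or>
        (a \<in> type_symbols (Suc n) \<and> b = Inr (Suc n)) \<or> (a = Inl (Suc n) \<and> b = Inl (Suc n))"
      using old by (auto simp: extend_type_def tuple_type_def)
    moreover have "a \<in> type_symbols n \<Longrightarrow> v a < v (Inl (Suc n))"
      "b \<in> type_symbols n \<Longrightarrow> v b < v (Inl (Suc n))" "v (Inl (Suc n)) < v (Inr (Suc n))"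
      using old_below new \<open>h z < z\<close> by simp_all
    ultimately show ?thesis
      unfolding type_symbols_Suc by (cases "a \<in> type_symbols n"; cases "b \<in> type_symbols n") auto
  qed
  then show ?thesis by auto
qed

definition set_type :: "(nat \<Rightarrow> nat) \<Rightarrow> nat set \<Rightarrow> (nat + nat) rel" where
  "set_type h X = tuple_type h (card X) (sorted_list_of_set X)"

lemma set_type_in_n_types:
  assumes "finite X" "\<And>z. z \<in> X \<Longrightarrow> h z < z \<and> h z \<notin> X"
  shows "set_type h X \<in> n_types (card X)"
  unfolding set_type_def using assms by (intro tuple_type_in_n_types) auto

lemma set_type_insert_top:
  assumes "finite Y" "\<And>y. y \<in> Y \<Longrightarrow> h y < y \<and> y < h z" "h z < z"
  shows "set_type h (insert z Y) = extend_type (card Y) (set_type h Y)"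
proof -
  have "z \<notin> Y" using assms by force
  have "sorted_list_of_set (insert z Y) = sorted_list_of_set Y @ [z]"
    using assms \<open>z \<notin> Y\<close> by (intro sorted_list_of_set_unique[THEN iffD1])
      (auto simp: sorted_wrt_append intro: order.strict_trans)
  moreover have "card (insert z Y) = Suc (card Y)" using assms(1) \<open>z \<notin> Y\<close> by simp
  moreover have "tuple_type h (Suc (card Y)) (sorted_list_of_set Y @ [z]) =
      extend_type (card Y) (tuple_type h (card Y) (sorted_list_of_set Y))"
    using assms by (intro tuple_type_append_top) auto
  ultimately show ?thesis unfolding set_type_def by simp
qed

section \<open>Realising types\<close>

lemma greedy_strict_mono_on:
  fixes P :: "(nat \<Rightarrow> nat) \<Rightarrow> nat \<Rightarrow> nat \<Rightarrow> bool"
  assumes choice: "\<And>t w. t < L \<Longrightarrow> (\<And>s. s < t \<Longrightarrow> P w s (w s)) \<Longrightarrow> infinite {z. P w t z}"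
    and local: "\<And>t w w' z. (\<And>s. s < t \<Longrightarrow> w s = w' s) \<Longrightarrow> P w t z \<Longrightarrow> P w' t z"
  shows "\<exists>w. strict_mono_on {..<L} w \<and> (\<forall>t<L. P w t (w t))"
proof -
  have "\<exists>w. strict_mono_on {..<N} w \<and> (\<forall>t<N. P w t (w t))" if "N \<le> L" for N
    using that
  proof (induction N)
    case 0
    show ?case by (auto simp: strict_mono_on_def)
  next
    case (Suc N)
    then obtain w where mono: "strict_mono_on {..<N} w" and good: "\<forall>t<N. P w t (w t)" by auto
    have "infinite {z. P w N z}" using choice[of N w] Suc.prems good by auto
    then obtain z where z: "P w N z" "Max (insert 0 (w ` {..<N})) < z"
      unfolding infinite_nat_iff_unbounded by blast
    have above: "w t < z" if "t < N" for t
      using z(2) Max_ge[of "insert 0 (w ` {..<N})" "w t"] that by auto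
    define w' where "w' = w(N := z)"
    have agree: "w' s = w s" if "s < N" for s using that by (simp add: w'_def)
    have "strict_mono_on {..<Suc N} w'"
      using strict_mono_onD[OF mono] above
      by (intro strict_mono_onI) (auto simp: w'_def less_Suc_eq)
    moreover have "P w' t (w' t)" if "t < Suc N" for t
    proof (cases "t = N")
      case True
      then show ?thesis using z(1) local[of N w w' z] agree by (simp add: w'_def)
    next
      case False
      then have "t < N" using that by simp
      then show ?thesis using good local[of t w w' "w t"] agree by simp
    qed
    ultimately show ?case by blast
  qed
  then show ?thesis by blast
qed

text \<open>Values are chosen greedily in the order of the ranks of the symbols: at the rank of y_j an
  element of A is needed whose h-value is the one already chosen at the (smaller) rank of x_j, and
  every other rank receives a value with an infinite h-fibre in A.\<close>
lemma n_type_rank_assignment: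
  fixes h :: "nat \<Rightarrow> nat"
  assumes R: "R \<in> n_types m" and r: "r = preorder_rank R (type_symbols m)"
    and V: "infinite {v. infinite {z\<in>A. h z = v}}"
  shows "\<exists>w. strict_mono_on {..<card (type_symbols m)} w \<and>
    (\<forall>j\<in>{1..m}. w (r (Inr j)) \<in> A \<and> h (w (r (Inr j))) = w (r (Inl j)))"
proof -
  note rank = n_type_rank[OF R r]
  define V where "V = {v. infinite {z\<in>A. h z = v}}"
  define P where "P w t z \<longleftrightarrow> (\<forall>j\<in>{1..m}. r (Inr j) = t \<longrightarrow> z \<in> A \<and> h z = w (r (Inl j))) \<and>
    ((\<forall>j\<in>{1..m}. r (Inr j) \<noteq> t) \<longrightarrow> z \<in> V)" for w t z
  have "infinite {z. P w t z}" if good: "\<And>s. s < t \<Longrightarrow> P w s (w s)" for t w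
  proof (cases "\<exists>j\<in>{1..m}. r (Inr j) = t")
    case True
    then obtain j where j: "j \<in> {1..m}" "r (Inr j) = t" by blast
    have "P w (r (Inl j)) (w (r (Inl j)))" using good rank(5)[OF j(1)] j(2) by blast
    moreover have "\<forall>j'\<in>{1..m}. r (Inr j') \<noteq> r (Inl j)" using rank(6)[OF j(1)] by metis
    ultimately have "w (r (Inl j)) \<in> V" by (simp add: P_def)
    then have "infinite {z\<in>A. h z = w (r (Inl j))}" by (simp add: V_def)
    moreover have "{z\<in>A. h z = w (r (Inl j))} \<subseteq> {z. P w t z}"
    proof
      fix z assume z: "z \<in> {z\<in>A. h z = w (r (Inl j))}"
      show "z \<in> {z. P w t z}"
        unfolding P_def mem_Collect_eq
      proof (intro conjI ballI impI)
        fix j' assume j': "j' \<in> {1..m}" "r (Inr j') = t"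
        have "j' = j" using rank(4)[OF j'(1) j(1)] j'(2) j(2) by simp
        then show "z \<in> A" "h z = w (r (Inl j'))" using z by simp_all
      next
        assume "\<forall>j'\<in>{1..m}. r (Inr j') \<noteq> t"
        then show "z \<in> V" using j by blast
      qed
    qed
    ultimately show ?thesis using infinite_super by blast
  next
    case False
    then have "V \<subseteq> {z. P w t z}" by (auto simp: P_def)
    then show ?thesis using V unfolding V_def by (rule infinite_super)
  qed
  moreover have "P w' t z" if "\<And>s. s < t \<Longrightarrow> w s = w' s" "P w t z" for t w w' z
    using that rank(5) by (auto simp: P_def)
  ultimately obtain w where w: "strict_mono_on {..<card (type_symbols m)} w"
    "\<forall>t<card (type_symbols m). P w t (w t)"
    using greedy_strict_mono_on[of "card (type_symbols m)" P] by blast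
  moreover have "w (r (Inr j)) \<in> A \<and> h (w (r (Inr j))) = w (r (Inl j))" if "j \<in> {1..m}" for j
    using w(2) rank(2)[of "Inr j"] that by (auto simp: P_def)
  ultimately show ?thesis by blast
qed

lemma set_type_realize:
  fixes h :: "nat \<Rightarrow> nat"
  assumes R: "R \<in> n_types m" and V: "infinite {v. infinite {z\<in>A. h z = v}}"
  shows "\<exists>X\<in>[A]\<^bsup>m\<^esup>. set_type h X = R"
proof -
  define r where "r = preorder_rank R (type_symbols m)"
  note rank = n_type_rank[OF R r_def]
  obtain w where mono: "strict_mono_on {..<card (type_symbols m)} w"
    and w: "\<And>j. j \<in> {1..m} \<Longrightarrow> w (r (Inr j)) \<in> A \<and> h (w (r (Inr j))) = w (r (Inl j))"
    using n_type_rank_assignment[OF R r_def V] by blast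
  define zs where "zs = map (\<lambda>i. w (r (Inr (Suc i)))) [0..<m]"
  have nth: "zs ! (i - 1) = w (r (Inr i))" if "i \<in> {1..m}" for i
    using that by (cases i) (simp_all add: zs_def)
  have zs_value: "tuple_value h zs a = w (r a)" if "a \<in> type_symbols m" for a
    using that nth w by (cases a) (simp_all add: tuple_value_def)
  have w_le_iff: "w (r a) \<le> w (r b) \<longleftrightarrow> r a \<le> r b" if "a \<in> type_symbols m" "b \<in> type_symbols m" for a b
    using strict_mono_on_less_eq[OF mono] rank(2) that by simp
  have sorted: "sorted_wrt (<) zs"
    unfolding sorted_wrt_iff_nth_less
  proof (intro allI impI)
    fix i j assume "i < j" "j < length zs"
    then have "Suc i \<in> {1..m}" "Suc j \<in> {1..m}" "r (Inr (Suc i)) < r (Inr (Suc j))"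
      using rank(3)[of "Suc i" "Suc j"] by (simp_all add: zs_def)
    then show "zs ! i < zs ! j"
      using strict_mono_onD[OF mono] rank(2) \<open>i < j\<close> \<open>j < length zs\<close> by (simp add: zs_def)
  qed
  have "tuple_type h m zs = R"
    using n_typesD(1)[OF R] rank(1) zs_value w_le_iff by (auto simp: tuple_type_def)
  moreover have "sorted_list_of_set (set zs) = zs" "card (set zs) = m"
    using sorted sorted_list_of_set.idem_if_sorted_distinct[of zs] distinct_card[of zs]
    by (simp_all add: strict_sorted_iff zs_def)
  moreover have "set zs \<subseteq> A" using w by (auto simp: zs_def)
  ultimately show ?thesis
    by (intro bexI[of _ "set zs"]) (simp_all add: set_type_def nsets_def)
qed

section \<open>Stepping down from n+1 to n\<close>

lemma weakly_Ramsey_finite_colours: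
  assumes R: "weakly_Ramsey n t S W" and WS: "W \<subseteq> Pow S"
    and "finite F" and c: "\<forall>X\<in>[S]\<^bsup>n\<^esup>. c X \<in> F"
  shows "\<exists>H\<in>W. card (c ` [H]\<^bsup>n\<^esup>) \<le> t"
proof -
  obtain g where g: "bij_betw g F {0..<card F}"
    using ex_bij_betw_finite_nat[OF \<open>finite F\<close>] by blast
  have "\<forall>X\<in>[S]\<^bsup>n\<^esup>. (g \<circ> c) X < card F" using c bij_betw_apply[OF g] by auto
  then obtain H where H: "H \<in> W" "card ((g \<circ> c) ` [H]\<^bsup>n\<^esup>) \<le> t"
    using R unfolding weakly_Ramsey_def by blast
  have "c ` [H]\<^bsup>n\<^esup> \<subseteq> F" using c nsets_mono[of H S n] H(1) WS by blast
  then have "card ((g \<circ> c) ` [H]\<^bsup>n\<^esup>) = card (c ` [H]\<^bsup>n\<^esup>)"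
    unfolding image_comp[symmetric] using bij_betw_imp_inj_on[OF g]
    by (intro card_image) (rule inj_on_subset)
  then show ?thesis using H by auto
qed

definition step_colouring ::
    "(nat \<Rightarrow> nat) \<Rightarrow> nat \<Rightarrow> (nat set \<Rightarrow> 'c) \<Rightarrow> nat set \<Rightarrow> 'c + (nat + nat) rel" where
  "step_colouring h n c X = (if set_type h X \<in> extend_type n ` n_types n
     then Inl (c (X - {Max X})) else Inr (set_type h X))"

lemma step_colouring_Inl:
  fixes h :: "nat \<Rightarrow> nat"
  assumes h: "\<And>z. z \<in> A \<Longrightarrow> h z < z \<and> h z \<notin> A"
    and fibres: "infinite {v. infinite {z\<in>A. h z = v}}" and Y: "Y \<in> [A]\<^bsup>n\<^esup>"
  shows "Inl (c Y) \<in> step_colouring h n c ` [A]\<^bsup>Suc n\<^esup>"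
proof -
  have Y: "finite Y" "card Y = n" "Y \<subseteq> A" using Y by (auto simp: nsets_def)
  obtain v where "Max (insert 0 Y) < v" "infinite {z\<in>A. h z = v}"
    using fibres unfolding infinite_nat_iff_unbounded by blast
  then obtain z where z: "z \<in> A" "Max (insert 0 Y) < h z"
    using infinite_imp_nonempty by force
  have below: "y < h z" if "y \<in> Y" for y
    using Max_ge[of "insert 0 Y" y] Y(1) that z(2) by simp
  have "h z < z" using h z(1) by blast
  then have above: "y < z" if "y \<in> Y" for y using below[OF that] by simp
  then have "z \<notin> Y" by blast
  have "set_type h (insert z Y) = extend_type n (set_type h Y)"
    using set_type_insert_top[of Y h z] Y below h \<open>h z < z\<close> by blast
  moreover have "set_type h Y \<in> n_types n"
    using set_type_in_n_types[of Y h] Y h by blast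
  ultimately have "set_type h (insert z Y) \<in> extend_type n ` n_types n" by simp
  moreover have "insert z Y - {Max (insert z Y)} = Y"
  proof -
    have "Max (insert z Y) = z"
      using Y(1) above by (intro Max_eqI) (auto intro: less_imp_le)
    then show ?thesis using \<open>z \<notin> Y\<close> by simp
  qed
  moreover have "insert z Y \<in> [A]\<^bsup>Suc n\<^esup>" using Y z(1) \<open>z \<notin> Y\<close> by (simp add: nsets_def)
  ultimately have "Inl (c Y) = step_colouring h n c (insert z Y)"
    by (simp add: step_colouring_def)
  then show ?thesis using \<open>insert z Y \<in> [A]\<^bsup>Suc n\<^esup>\<close> by (rule image_eqI)
qed

lemma step_colouring_Inr:
  fixes h :: "nat \<Rightarrow> nat"
  assumes fibres: "infinite {v. infinite {z\<in>A. h z = v}}"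
    and R: "R \<in> n_types (Suc n) - extend_type n ` n_types n"
  shows "Inr R \<in> step_colouring h n c ` [A]\<^bsup>Suc n\<^esup>"
proof -
  obtain X where X: "X \<in> [A]\<^bsup>Suc n\<^esup>" "set_type h X = R"
    using set_type_realize[of R "Suc n" A h] R fibres by blast
  then have "Inr R = step_colouring h n c X" using R by (simp add: step_colouring_def)
  then show ?thesis using X(1) by (rule image_eqI)
qed

lemma step_colouring_range:
  assumes c: "\<forall>X\<in>[S]\<^bsup>n\<^esup>. c X \<in> C" and X: "X \<in> [S]\<^bsup>Suc n\<^esup>"
  shows "step_colouring h n c X \<in> Inl ` C \<union> Inr ` Pow (type_symbols (Suc n) \<times> type_symbols (Suc n))"
proof -
  have X: "finite X" "card X = Suc n" "X \<subseteq> S" using X by (auto simp: nsets_def)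
  then have "Max X \<in> X" by (intro Max_in) auto
  then have "X - {Max X} \<in> [S]\<^bsup>n\<^esup>" using X by (auto simp: nsets_def)
  moreover have "set_type h X \<subseteq> type_symbols (Suc n) \<times> type_symbols (Suc n)"
    using X(2) by (auto simp: set_type_def tuple_type_def)
  ultimately show ?thesis using c by (auto simp: step_colouring_def)
qed

text \<open>Every type that is not an extension already occupies a colour of its own, and there are at
  least T(n+1) - T(n) of them.\<close>
lemma card_colours_le_T:
  fixes h :: "nat \<Rightarrow> nat"
  assumes h: "\<And>z. z \<in> A \<Longrightarrow> h z < z \<and> h z \<notin> A"
    and fibres: "infinite {v. infinite {z\<in>A. h z = v}}"
    and fin: "finite (step_colouring h n c ` [A]\<^bsup>Suc n\<^esup>)"
    and card: "card (step_colouring h n c ` [A]\<^bsup>Suc n\<^esup>) \<le> T (Suc n)"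
  shows "card (c ` [A]\<^bsup>n\<^esup>) \<le> T n"
proof -
  define E where "E = extend_type n ` n_types n"
  let ?C = "Inl ` c ` [A]\<^bsup>n\<^esup> \<union> Inr ` (n_types (Suc n) - E)"
  have sub: "?C \<subseteq> step_colouring h n c ` [A]\<^bsup>Suc n\<^esup>"
    using step_colouring_Inl[OF h fibres] step_colouring_Inr[OF fibres] unfolding E_def by blast
  have "card (c ` [A]\<^bsup>n\<^esup>) + card (n_types (Suc n) - E) = card ?C"
    using finite_subset[OF sub fin] by (subst card_Un_disjoint) (auto simp: card_image)
  also have "\<dots> \<le> T (Suc n)" using card_mono[OF fin sub] card by linarith
  finally have "card (c ` [A]\<^bsup>n\<^esup>) + card (n_types (Suc n) - E) \<le> T (Suc n)" .
  moreover have "T (Suc n) - card E \<le> card (n_types (Suc n) - E)"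
    using diff_card_le_card_Diff[of E "n_types (Suc n)"] finite_n_types by (simp add: E_def T_def)
  moreover have "card E \<le> T n" unfolding E_def T_def by (rule card_image_le[OF finite_n_types])
  ultimately show ?thesis by linarith
qed

lemma weakly_Ramsey_Suc_imp_weakly_Ramsey_nat:
  fixes S :: "nat set"
  assumes U: "ultrafilter_on S W" and "\<not> P_point S W"
    and R: "weakly_Ramsey (Suc n) (T (Suc n)) S W"
  shows "weakly_Ramsey n (T n) S W"
  unfolding weakly_Ramsey_def
proof (intro allI impI)
  fix k and c :: "nat set \<Rightarrow> nat"
  assume "\<forall>X\<in>[S]\<^bsup>n\<^esup>. c X < k"
  then have c: "\<forall>X\<in>[S]\<^bsup>n\<^esup>. c X \<in> {..<k}" by simp
  obtain G h where G: "G \<in> W" "\<And>z. z \<in> G \<Longrightarrow> h z < z \<and> h z \<notin> G"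
    and fibres: "\<And>H. H \<in> W \<Longrightarrow> infinite {v. infinite {z\<in>H. h z = v}}"
    by (fact not_P_point_predecessor[OF U \<open>\<not> P_point S W\<close>])
  have WS: "W \<subseteq> Pow S" using ultrafilter_on_subset[OF U] by blast
  define F where "F = Inl ` {..<k} \<union> Inr ` Pow (type_symbols (Suc n) \<times> type_symbols (Suc n))"
  have F: "finite F" "\<forall>X\<in>[S]\<^bsup>Suc n\<^esup>. step_colouring h n c X \<in> F"
    using step_colouring_range[OF c] by (auto simp: F_def)
  then obtain H where H: "H \<in> W" "card (step_colouring h n c ` [H]\<^bsup>Suc n\<^esup>) \<le> T (Suc n)"
    using weakly_Ramsey_finite_colours[OF R WS] by blast
  define A where "A = H \<inter> G"
  have A: "A \<in> W" "A \<subseteq> H" "\<And>z. z \<in> A \<Longrightarrow> h z < z \<and> h z \<notin> A"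
    using ultrafilter_on_Int[OF U H(1) G(1)] G(2) by (auto simp: A_def)
  have sub: "step_colouring h n c ` [A]\<^bsup>Suc n\<^esup> \<subseteq> step_colouring h n c ` [H]\<^bsup>Suc n\<^esup>"
    using nsets_mono[OF A(2)] by blast
  have "step_colouring h n c ` [H]\<^bsup>Suc n\<^esup> \<subseteq> F"
    using nsets_mono[of H S] H(1) WS F(2) by blast
  then have fin: "finite (step_colouring h n c ` [H]\<^bsup>Suc n\<^esup>)" using F(1) by (rule finite_subset)
  have "card (c ` [A]\<^bsup>n\<^esup>) \<le> T n"
  proof (rule card_colours_le_T[OF A(3) fibres[OF A(1)]])
    show "finite (step_colouring h n c ` [A]\<^bsup>Suc n\<^esup>)" using sub fin by (rule finite_subset)
    show "card (step_colouring h n c ` [A]\<^bsup>Suc n\<^esup>) \<le> T (Suc n)"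
      using card_mono[OF fin sub] H(2) by linarith
  qed
  then show "\<exists>H\<in>W. card (c ` [H]\<^bsup>n\<^esup>) \<le> T n" using A(1) by blast
qed

theorem mainTheorem5:
  fixes S :: "'a set" and W :: "'a set set" and n :: nat
  assumes "n \<ge> 1"
    and "countable S" and "infinite S"
    and "ultrafilter_on S W" and "nonprincipal S W"
    and "\<not> P_point S W"
    and "weakly_Ramsey (n + 1) (T (n + 1)) S W"
  shows "weakly_Ramsey n (T n) S W"
proof -
  define e where "e = to_nat_on S"
  have e: "bij_betw e S (e ` S)"
    unfolding e_def using inj_on_to_nat_on[OF assms(2)] by (rule inj_on_imp_bij_betw)
  have WS: "W \<subseteq> Pow S" using ultrafilter_on_subset[OF assms(4)] by blast
  have "ultrafilter_on (e ` S) ((`) e ` W)" using ultrafilter_on_image[OF e assms(4)] .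
  moreover have "\<not> P_point (e ` S) ((`) e ` W)" using P_point_of_image[OF e WS] assms(6) by blast
  moreover have "weakly_Ramsey (Suc n) (T (Suc n)) (e ` S) ((`) e ` W)"
    using weakly_Ramsey_image_iff[OF e WS] assms(7) by simp
  ultimately have "weakly_Ramsey n (T n) (e ` S) ((`) e ` W)"
    by (rule weakly_Ramsey_Suc_imp_weakly_Ramsey_nat)
  then show ?thesis using weakly_Ramsey_image_iff[OF e WS] by simp
qed

end
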